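(* Let $\mathbf{F}:\ell^n\times\ell^m\to\ell^n$ be the strictly causal plant operator $\mathbf{F}(\mathbf{x},\mathbf{u})=(0,f_1(x_0,u_0),f_2(x_{1:0},u_{1:0}),\dots,f_t(x_{t-1:0},u_{t-1:0}),\dots)$ determined by arbitrary functions $f_t:(\mathbb{R}^n)^t\times(\mathbb{R}^m)^t\to\mathbb{R}^n$, $t\ge 1$. Let $\mathbf{\Psi}=(\mathbf{\Psi}^x,\mathbf{\Psi}^u)$ be a causal operator $\ell^n\to\ell^n\times\ell^m$. Then $\mathbf{\Psi}$ is a realizable closed-loop map of $\mathbf{F}$ (i.e. there exists a causal $\mathbf{K}:\ell^n\to\ell^m$ with $\mathbf{\Phi}[\mathbf{F},\mathbf{K}]=\mathbf{\Psi}$) if and only if $$\mathbf{\Psi}^x=\mathbf{F}(\mathbf{\Psi})+\mathbf{I},\qquad\text{i.e. } \mathbf{\Psi}^x(\mathbf{w})=\mathbf{F}(\mathbf{\Psi}^x(\mathbf{w}),\mathbf{\Psi}^u(\mathbf{w}))+\mathbf{w}\ \text{ for all }\mathbf{w}\in\ell^n.$$ Moreover, in this case $\mathbf{\Psi}^x$ has a causal inverse $(\mathbf{\Psi}^x)^{-1}$, and $\mathbf{K}'=\mathbf{\Psi}^u\circ(\mathbf{\Psi}^x)^{-1}$ is the unique causal controller $\mathbf{K}$ satisfying $\mathbf{\Phi}[\mathbf{F},\mathbf{K}]=\mathbf{\Psi}$.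
   Context: $\ell^n$ denotes the space of sequences $\mathbf{x}=(x_0,x_1,\dots)$ with $x_t\in\mathbb{R}^n$; $x_{t:0}$ denotes the tuple $(x_t,x_{t-1},\dots,x_0)$. An operator $\mathbf{A}:\ell^n\to\ell^m$ is causal if there are functions $A_t:(\mathbb{R}^n)^{t+1}\to\mathbb{R}^m$ ("component functions") such that $(\mathbf{A}(\mathbf{x}))_t=A_t(x_{t:0})$ for all $t$ and $\mathbf{x}$; it is strictly causal if moreover $A_t(x_t,x_{t-1:0})=A_t(0,x_{t-1:0})$ for all arguments. Sums of operators are pointwise, products are compositions, $\mathbf{I}$ is the identity, and for $\mathbf{\Psi}=(\mathbf{\Psi}^x,\mathbf{\Psi}^u)$, $\mathbf{F}(\mathbf{\Psi})$ denotes $\mathbf{w}\mapsto\mathbf{F}(\mathbf{\Psi}^x(\mathbf{w}),\mathbf{\Psi}^u(\mathbf{w}))$. Given a causal controller $\mathbf{K}:\ell^n\to\ell^m$ (components $K_t$), the closed loop is $x_t=f_t(x_{t-1:0},u_{t-1:0})+w_t$ for $t\ge1$, $x_0=w_0$, $u_t=K_t(x_{t:0})$; equivalently $\mathbf{x}=\mathbf{F}(\mathbf{x},\mathbf{u})+\mathbf{w}$, $\mathbf{u}=\mathbf{K}(\mathbf{x})$. For each disturbance $\mathbf{w}\in\ell^n$ this has a unique solution $(\mathbf{x},\mathbf{u})$, and the closed-loop map $\mathbf{\Phi}[\mathbf{F},\mathbf{K}]:\ell^n\to\ell^n\times\ell^m$ is defined by $\mathbf{w}\mapsto(\mathbf{x},\mathbf{u})$.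 *)

theory Defs
  imports "HOL-Analysis.Analysis"
begin

text \<open>Sequences in ell^n are functions nat => real^'n. The tuple x_{t:0} is
represented by the list [x_0, ..., x_t] (same information, reversed order).\<close>

definition causal :: "((nat \<Rightarrow> 'a) \<Rightarrow> (nat \<Rightarrow> 'b)) \<Rightarrow> bool" where
  "causal A \<longleftrightarrow> (\<exists>C :: nat \<Rightarrow> 'a list \<Rightarrow> 'b. \<forall>t x. A x t = C t (map x [0..<Suc t]))"

definition plant ::
  "(nat \<Rightarrow> (real^'n) list \<Rightarrow> (real^'m) list \<Rightarrow> real^'n)
    \<Rightarrow> (nat \<Rightarrow> real^'n) \<Rightarrow> (nat \<Rightarrow> real^'m) \<Rightarrow> (nat \<Rightarrow> real^'n)" where
  "plant f x u t = (if t = 0 then 0 else f t (map x [0..<t]) (map u [0..<t]))"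

definition closed_loop ::
  "(nat \<Rightarrow> (real^'n) list \<Rightarrow> (real^'m) list \<Rightarrow> real^'n)
    \<Rightarrow> ((nat \<Rightarrow> real^'n) \<Rightarrow> (nat \<Rightarrow> real^'m))
    \<Rightarrow> (nat \<Rightarrow> real^'n) \<Rightarrow> (nat \<Rightarrow> real^'n) \<times> (nat \<Rightarrow> real^'m)" where
  "closed_loop f K w = (THE p. (\<forall>t. fst p t = plant f (fst p) (snd p) t + w t)
                              \<and> snd p = K (fst p))"

end

theory Submission
  imports Defs
begin

text \<open>Both the closed loop and the inverse of \<open>\<Psi>\<^sup>x\<close> are fixed points of strictly causal
operators: \<open>x = F(x, K x) + w\<close> and \<open>x = y - F(\<Psi>\<^sup>x x, \<Psi>\<^sup>u x)\<close>. A strictly causal operator has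
exactly one fixed point, computed value by value, and fixed points of two such operators
agree up to time \<open>t\<close> as long as the operators do; this yields causality of the inverse.
If \<open>\<Psi>\<^sup>x = F(\<Psi>) + I\<close>, then \<open>K' = \<Psi>\<^sup>u \<circ> (\<Psi>\<^sup>x)\<inverse>\<close> closes the loop onto \<open>\<Psi>\<close>, and any realizing
controller satisfies \<open>\<Psi>\<^sup>u = K \<circ> \<Psi>\<^sup>x\<close>, hence equals \<open>K'\<close>.\<close>

definition strictly_causal :: "((nat \<Rightarrow> 'a) \<Rightarrow> nat \<Rightarrow> 'b) \<Rightarrow> bool" where
  "strictly_causal A \<longleftrightarrow> (\<forall>x y t. (\<forall>s<t. x s = y s) \<longrightarrow> A x t = A y t)"

lemma causal_iff_prefix_determined:
  "causal A \<longleftrightarrow> (\<forall>x y t. (\<forall>s\<le>t. x s = y s) \<longrightarrow> A x t = A y t)"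
proof
  assume "causal A"
  then obtain C where C: "\<And>t x. A x t = C t (map x [0..<Suc t])"
    unfolding causal_def by blast
  show "\<forall>x y t. (\<forall>s\<le>t. x s = y s) \<longrightarrow> A x t = A y t"
  proof (intro allI impI)
    fix x y :: "nat \<Rightarrow> 'a" and t
    assume "\<forall>s\<le>t. x s = y s"
    then have "map x [0..<Suc t] = map y [0..<Suc t]"
      by (simp add: less_Suc_eq_le del: upt_Suc)
    then show "A x t = A y t"
      by (simp only: C)
  qed
next
  assume "\<forall>x y t. (\<forall>s\<le>t. x s = y s) \<longrightarrow> A x t = A y t"
  then have "A x t = A (\<lambda>s. map x [0..<Suc t] ! s) t" for x t
    by (simp del: upt_Suc)
  then show "causal A"
    unfolding causal_def by (intro exI[of _ "\<lambda>t l. A (\<lambda>s. l ! s) t"]) blast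
qed

lemma causalD: "causal A \<Longrightarrow> (\<And>s. s \<le> t \<Longrightarrow> x s = y s) \<Longrightarrow> A x t = A y t"
  unfolding causal_iff_prefix_determined by blast

lemma strictly_causalD: "strictly_causal A \<Longrightarrow> (\<And>s. s < t \<Longrightarrow> x s = y s) \<Longrightarrow> A x t = A y t"
  unfolding strictly_causal_def by blast

lemma strictly_causal_pointwise:
  fixes A :: "(nat \<Rightarrow> 'a) \<Rightarrow> nat \<Rightarrow> 'b"
  assumes "strictly_causal A"
  shows "strictly_causal (\<lambda>x t. h t (A x t))"
  unfolding strictly_causal_def
proof (intro allI impI)
  fix x y :: "nat \<Rightarrow> 'a" and t
  assume "\<forall>s<t. x s = y s"
  then show "h t (A x t) = h t (A y t)"
    using strictly_causalD[OF assms, of t x y] by simp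
qed

lemma causal_id: "causal (\<lambda>x. x)"
  by (simp add: causal_iff_prefix_determined)

lemma causal_comp:
  fixes A :: "(nat \<Rightarrow> 'b) \<Rightarrow> nat \<Rightarrow> 'c" and B :: "(nat \<Rightarrow> 'a) \<Rightarrow> nat \<Rightarrow> 'b"
  assumes "causal A" and "causal B"
  shows "causal (A \<circ> B)"
  unfolding causal_iff_prefix_determined
proof (intro allI impI)
  fix x y :: "nat \<Rightarrow> 'a" and t
  assume "\<forall>s\<le>t. x s = y s"
  then have "B x s = B y s" if "s \<le> t" for s
    using that by (intro causalD[OF assms(2)]) simp
  then show "(A \<circ> B) x t = (A \<circ> B) y t"
    unfolding comp_def by (rule causalD[OF assms(1)])
qed

text \<open>The \<open>n\<close>-th approximation is correct below \<open>n\<close>; its initial value is irrelevant.\<close>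

primrec causal_fix_approx :: "((nat \<Rightarrow> 'a) \<Rightarrow> nat \<Rightarrow> 'a) \<Rightarrow> nat \<Rightarrow> nat \<Rightarrow> 'a" where
  "causal_fix_approx A 0 = undefined"
| "causal_fix_approx A (Suc n) = (causal_fix_approx A n)(n := A (causal_fix_approx A n) n)"

definition causal_fix :: "((nat \<Rightarrow> 'a) \<Rightarrow> nat \<Rightarrow> 'a) \<Rightarrow> nat \<Rightarrow> 'a" where
  "causal_fix A t = causal_fix_approx A (Suc t) t"

lemma causal_fix_approx_eq: "s < n \<Longrightarrow> causal_fix_approx A n s = causal_fix A s"
  by (induction n) (auto simp: causal_fix_def less_Suc_eq)

lemma causal_fix_eq:
  assumes "strictly_causal A"
  shows "A (causal_fix A) = causal_fix A"
proof
  fix t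
  have "A (causal_fix A) t = A (causal_fix_approx A t) t"
    by (rule strictly_causalD[OF assms]) (simp add: causal_fix_approx_eq)
  then show "A (causal_fix A) t = causal_fix A t"
    by (simp add: causal_fix_def)
qed

lemma strictly_causal_fixpoints_agree:
  assumes "strictly_causal A" and "A x = x" and "B y = y"
    and "\<And>s. s \<le> t \<Longrightarrow> A y s = B y s"
  shows "s \<le> t \<Longrightarrow> x s = y s"
proof (induction s rule: less_induct)
  case (less s)
  have "x s = A x s"
    using assms(2) by simp
  also have "\<dots> = A y s"
    using less by (intro strictly_causalD[OF assms(1)]) simp
  also have "\<dots> = y s"
    using assms(3,4) less.prems by (metis fun_cong)
  finally show ?case .
qed

lemma strictly_causal_fixpoint_unique:
  assumes "strictly_causal A" and "A x = x" and "A y = y"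
  shows "x = y"
  using strictly_causal_fixpoints_agree[of A x A y] assms by blast

lemma plant_cong:
  assumes "\<And>s. s < t \<Longrightarrow> x s = x' s" and "\<And>s. s < t \<Longrightarrow> u s = u' s"
  shows "plant f x u t = plant f x' u' t"
proof -
  have "map x [0..<t] = map x' [0..<t]" and "map u [0..<t] = map u' [0..<t]"
    using assms by simp_all
  then show ?thesis
    unfolding plant_def by (simp only:)
qed

lemma strictly_causal_plant:
  fixes X :: "(nat \<Rightarrow> 'a) \<Rightarrow> nat \<Rightarrow> real^'n" and U :: "(nat \<Rightarrow> 'a) \<Rightarrow> nat \<Rightarrow> real^'m"
  assumes "causal X" and "causal U"
  shows "strictly_causal (\<lambda>x. plant f (X x) (U x))"
  unfolding strictly_causal_def
proof (intro allI impI)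
  fix x y :: "nat \<Rightarrow> 'a" and t
  assume "\<forall>s<t. x s = y s"
  then have "X x s = X y s \<and> U x s = U y s" if "s < t" for s
    using that by (auto intro!: causalD[OF assms(1)] causalD[OF assms(2)])
  then show "plant f (X x) (U x) t = plant f (X y) (U y) t"
    by (intro plant_cong) simp_all
qed

lemma closed_loop_eq_iff:
  assumes "causal K"
  shows "closed_loop f K w = (x, u) \<longleftrightarrow> (\<forall>t. x t = plant f x u t + w t) \<and> u = K x"
proof -
  define A where "A = (\<lambda>x t. plant f x (K x) t + w t)"
  have A: "strictly_causal A"
    unfolding A_def
    using strictly_causal_pointwise[OF strictly_causal_plant[OF causal_id assms]] .
  have solution_iff: "(\<forall>t. x t = plant f x u t + w t) \<and> u = K x
      \<longleftrightarrow> (x, u) = (causal_fix A, K (causal_fix A))" for x u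
  proof -
    have "A x = x \<longleftrightarrow> (\<forall>t. x t = plant f x (K x) t + w t)"
      by (auto simp: A_def fun_eq_iff)
    then have "(\<forall>t. x t = plant f x u t + w t) \<and> u = K x \<longleftrightarrow> A x = x \<and> u = K x"
      by auto
    also have "\<dots> \<longleftrightarrow> x = causal_fix A \<and> u = K x"
      using strictly_causal_fixpoint_unique[OF A _ causal_fix_eq[OF A]] causal_fix_eq[OF A]
      by blast
    finally show ?thesis
      by auto
  qed
  have "closed_loop f K w = (causal_fix A, K (causal_fix A))"
    unfolding closed_loop_def
  proof (rule the_equality)
    fix p
    assume "(\<forall>t. fst p t = plant f (fst p) (snd p) t + w t) \<and> snd p = K (fst p)"
    then show "p = (causal_fix A, K (causal_fix A))"
      using solution_iff[of "fst p" "snd p"] by simp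
  qed (use solution_iff[of "causal_fix A" "K (causal_fix A)"] in simp)
  then show ?thesis
    using solution_iff by auto
qed

lemma closed_loop_realizes_iff:
  assumes "causal K"
  shows "closed_loop f K = (\<lambda>w. (X w, U w)) \<longleftrightarrow>
    (\<forall>w t. X w t = plant f (X w) (U w) t + w t) \<and> (\<forall>w. U w = K (X w))"
  using closed_loop_eq_iff[OF assms] by (auto simp: fun_eq_iff)

lemma state_response_has_causal_inverse:
  fixes Psix :: "(nat \<Rightarrow> real^'n) \<Rightarrow> nat \<Rightarrow> real^'n"
  assumes "causal Psix" and "causal Psiu"
    and response: "\<And>w t. Psix w t = plant f (Psix w) (Psiu w) t + w t"
  shows "\<exists>Inv. causal Inv \<and> (\<forall>w. Inv (Psix w) = w) \<and> (\<forall>y. Psix (Inv y) = y)"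
proof -
  define A where "A y = (\<lambda>x t. y t - plant f (Psix x) (Psiu x) t)" for y
  have A: "strictly_causal (A y)" for y
    unfolding A_def
    using strictly_causal_pointwise[OF strictly_causal_plant[OF assms(1,2)]] .
  define Inv where "Inv y = causal_fix (A y)" for y
  have Inv: "A y (Inv y) = Inv y" for y
    unfolding Inv_def by (rule causal_fix_eq[OF A])
  have "causal Inv"
    unfolding causal_iff_prefix_determined
  proof (intro allI impI)
    fix y y' :: "nat \<Rightarrow> real^'n" and t
    assume "\<forall>s\<le>t. y s = y' s"
    then have "A y (Inv y') s = A y' (Inv y') s" if "s \<le> t" for s
      using that by (simp add: A_def)
    then show "Inv y t = Inv y' t"
      using strictly_causal_fixpoints_agree[of "A y" "Inv y" "A y'" "Inv y'" t] A Inv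
      by blast
  qed
  moreover have "Inv (Psix w) = w" for w
    using strictly_causal_fixpoint_unique[OF A Inv, of "Psix w" w] response
    by (simp add: A_def fun_eq_iff)
  moreover have "Psix (Inv y) = y" for y
  proof
    fix t
    show "Psix (Inv y) t = y t"
      using fun_cong[OF Inv[of y], of t] response[of "Inv y" t]
      by (simp add: A_def diff_eq_eq add.commute)
  qed
  ultimately show ?thesis
    by blast
qed

theorem theorem1:
  fixes f :: "nat \<Rightarrow> (real^'n) list \<Rightarrow> (real^'m) list \<Rightarrow> real^'n"
    and Psix :: "(nat \<Rightarrow> real^'n) \<Rightarrow> (nat \<Rightarrow> real^'n)"
    and Psiu :: "(nat \<Rightarrow> real^'n) \<Rightarrow> (nat \<Rightarrow> real^'m)"
  assumes "causal Psix" and "causal Psiu"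
  shows "((\<exists>K :: (nat \<Rightarrow> real^'n) \<Rightarrow> (nat \<Rightarrow> real^'m).
              causal K \<and> closed_loop f K = (\<lambda>w. (Psix w, Psiu w)))
          \<longleftrightarrow> (\<forall>w t. Psix w t = plant f (Psix w) (Psiu w) t + w t))
       \<and> ((\<forall>w t. Psix w t = plant f (Psix w) (Psiu w) t + w t) \<longrightarrow>
          (\<exists>Inv :: (nat \<Rightarrow> real^'n) \<Rightarrow> (nat \<Rightarrow> real^'n).
              causal Inv \<and> (\<forall>w. Inv (Psix w) = w) \<and> (\<forall>y. Psix (Inv y) = y)
            \<and> causal (Psiu \<circ> Inv)
            \<and> closed_loop f (Psiu \<circ> Inv) = (\<lambda>w. (Psix w, Psiu w))
            \<and> (\<forall>K. causal K \<and> closed_loop f K = (\<lambda>w. (Psix w, Psiu w))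
                   \<longrightarrow> K = Psiu \<circ> Inv)))"
proof -
  have inverse: "\<exists>Inv. causal Inv \<and> (\<forall>w. Inv (Psix w) = w) \<and> (\<forall>y. Psix (Inv y) = y)
      \<and> causal (Psiu \<circ> Inv) \<and> closed_loop f (Psiu \<circ> Inv) = (\<lambda>w. (Psix w, Psiu w))
      \<and> (\<forall>K. causal K \<and> closed_loop f K = (\<lambda>w. (Psix w, Psiu w)) \<longrightarrow> K = Psiu \<circ> Inv)"
    if response: "\<forall>w t. Psix w t = plant f (Psix w) (Psiu w) t + w t"
  proof -
    obtain Inv where Inv: "causal Inv" "\<forall>w. Inv (Psix w) = w" "\<forall>y. Psix (Inv y) = y"
      using state_response_has_causal_inverse[OF assms] response by blast
    have K': "causal (Psiu \<circ> Inv)"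
      using causal_comp[OF assms(2) Inv(1)] .
    have K'_realizes: "closed_loop f (Psiu \<circ> Inv) = (\<lambda>w. (Psix w, Psiu w))"
      using closed_loop_realizes_iff[OF K'] response Inv(2) by simp
    have K'_unique: "K = Psiu \<circ> Inv"
      if "causal K" and "closed_loop f K = (\<lambda>w. (Psix w, Psiu w))" for K
    proof
      fix y
      have "K y = K (Psix (Inv y))"
        using Inv(3) by simp
      also have "\<dots> = Psiu (Inv y)"
        using closed_loop_realizes_iff[OF that(1)] that(2) by simp
      finally show "K y = (Psiu \<circ> Inv) y"
        by simp
    qed
    show ?thesis
      using Inv K' K'_realizes K'_unique by blast
  qed
  then show ?thesis
    using closed_loop_realizes_iff by blast
qed

end
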